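(* Let $\lambda_n>0$ for $n\ge1$ and $0<\nu\le1$, and let $p^{\nu}(n,t)$ be the solution of $$\partial_t^{\nu} p^{\nu}(n,t)=-\lambda_np^{\nu}(n,t)+\lambda_{n-1}p^{\nu}(n-1,t),\qquad n\geq 1,$$ with $p^{\nu}(0,t)=0$, $p^{\nu}(1,0)=1$ and $p^{\nu}(n,0)=0$ for $n\ge2$ (the fractional pure birth process). Then $$p^{\nu}(n,t)=(-1)^{n-1}\frac{\lambda_1}{\lambda_n}\sum_{k=n-1}^{\infty}\frac{(-1)^k t^{k\nu}}{\Gamma(k\nu+1)}\sum_{\Lambda^k_n}\prod_{j=1}^n\lambda_j^{k_j},\qquad n\geq1,$$ where $\Lambda^k_n=\{(k_1,\ldots,k_n):\ \sum_{j=1}^nk_j=k,\ k_1\in\mathbb{N}_0,\ k_j\in\mathbb{N}_0\setminus\{0\} \text{ for } 2\leq j\leq n\}$.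
   Context: $\mathbb{N}_0$ denotes the set of nonnegative integers. For $0<\nu<1$, $\partial_t^{\nu}f(t)=\frac{1}{\Gamma(1-\nu)}\int_0^t (t-s)^{-\nu}f'(s)\,\mathrm{d}s$ is the Caputo derivative, and $\partial_t^{1}f=f'$. *)

theory Defs
  imports "HOL-Analysis.Analysis"
begin

definition caputo :: "real \<Rightarrow> (real \<Rightarrow> real) \<Rightarrow> real \<Rightarrow> real" where
  "caputo nu f t =
     (if nu = 1 then deriv f t
      else (1 / Gamma (1 - nu)) * integral {0..t} (\<lambda>s. (t - s) powr (- nu) * deriv f s))"

text \<open>The index set Lambda^k_n: tuples (k_1,...,k_n) encoded as functions on {1..n}
  (zero outside), summing to k, with k_j >= 1 for 2 <= j <= n.\<close>
definition Lambda_set :: "nat \<Rightarrow> nat \<Rightarrow> (nat \<Rightarrow> nat) set" where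
  "Lambda_set k n = {kk. (\<forall>j. j \<notin> {1..n} \<longrightarrow> kk j = 0) \<and> (\<Sum>j=1..n. kk j) = k
                        \<and> (\<forall>j\<in>{2..n}. 1 \<le> kk j)}"

end

theory Submission
  imports Defs
begin

text \<open>
  Write a(n,k) = (-1)^(n-1) (\<lambda>_1/\<lambda>_n) (-1)^k \<Sum> over \<Lambda>^k_n of \<Prod>_j \<lambda>_j^k_j.
  Splitting \<Lambda>^(k+1)_n according to whether k_n = 1 or k_n \<ge> 2 gives the recurrence
  a(n,k+1) = - \<lambda>_n a(n,k) + \<lambda>_(n-1) a(n-1,k). The coefficients grow at most geometrically,
  so q_n(t) = \<Sum>_k a(n,k) t^(k\<nu>) / \<Gamma>(k\<nu>+1) converges for all t, and by the Beta integral
  its Caputo derivative is computed termwise by shifting the coefficients: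
  \<partial>^\<nu> q_n = \<Sum>_k a(n,k+1) t^(k\<nu>) / \<Gamma>(k\<nu>+1). Hence the q_n solve the system with the
  prescribed initial values. Uniqueness follows by induction on n: d = p_n - q_n satisfies
  \<partial>^\<nu> d = - \<lambda>_n d and d(0) = 0, while at a positive maximum of d on [0,t] the Caputo
  derivative of d is nonnegative; the same argument applies to -d.
\<close>

lemma has_integral_Beta_scaled:
  fixes a b t :: real
  assumes a: "a > 0" and b: "b > 0" and t: "t > 0"
  shows "((\<lambda>s. s powr (a - 1) * (t - s) powr (b - 1)) has_integral t powr (a + b - 1) * Beta a b) {0..t}"
proof -
  have "((\<lambda>x. (x / t) powr (a - 1) * (1 - x / t) powr (b - 1)) has_integral t * Beta a b) {0..t}"
    using has_integral_stretch_real[OF has_integral_Beta_real[OF a b], of "1/t"] t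
    by (simp add: divide_inverse_commute)
  moreover have "(x / t) powr (a - 1) * (1 - x / t) powr (b - 1)
      = t powr (- (a + b - 2)) * (x powr (a - 1) * (t - x) powr (b - 1))" if "x \<in> {0..t}" for x
  proof -
    have "1 - x / t = (t - x) / t" using t by (simp add: field_simps)
    then have "(x / t) powr (a - 1) * (1 - x / t) powr (b - 1)
        = x powr (a - 1) * (t - x) powr (b - 1) / (t powr (a - 1) * t powr (b - 1))"
      using that t by (simp add: powr_divide)
    also have "t powr (a - 1) * t powr (b - 1) = t powr (a + b - 2)"
      by (simp add: powr_add[symmetric])
    also have "x powr (a - 1) * (t - x) powr (b - 1) / t powr (a + b - 2)
        = t powr (- (a + b - 2)) * (x powr (a - 1) * (t - x) powr (b - 1))"
      by (subst powr_minus) (simp add: divide_inverse)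
    finally show ?thesis .
  qed
  ultimately have "((\<lambda>x. t powr (- (a + b - 2)) * (x powr (a - 1) * (t - x) powr (b - 1)))
      has_integral t * Beta a b) {0..t}"
    by (rule has_integral_eq[rotated]) simp
  from has_integral_mult_right[OF this, of "t powr (a + b - 2)"]
  have "((\<lambda>x. (t powr (a + b - 2) * t powr (- (a + b - 2))) * (x powr (a - 1) * (t - x) powr (b - 1)))
      has_integral (t powr (a + b - 2) * t) * Beta a b) {0..t}"
    by (simp only: mult.assoc)
  moreover have "t powr (a + b - 2) * t powr (- (a + b - 2)) = 1"
    using t by (simp add: powr_add[symmetric])
  moreover have "t powr (a + b - 2) * t = t powr (a + b - 1)"
    using t powr_mult_base[of t "a + b - 2"] by (simp add: algebra_simps)
  ultimately show ?thesis by simp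
qed

lemma power_div_fact_le_exp:
  fixes x :: real assumes "x \<ge> 0"
  shows "x ^ n / fact n \<le> exp x"
proof -
  have s: "(\<lambda>n. x ^ n / fact n) sums exp x"
    using exp_converges[of x] by (simp add: divide_inverse mult.commute scaleR_conv_of_real)
  have "sum (\<lambda>n. x ^ n / fact n) {n} \<le> suminf (\<lambda>n. x ^ n / fact n)"
    by (rule sum_le_suminf) (use s assms in \<open>auto simp: sums_iff\<close>)
  then show ?thesis using s by (simp add: sums_iff)
qed

lemma fact_floor_le_Gamma:
  fixes x :: real
  assumes "x \<ge> 1"
  shows "fact (nat \<lfloor>x\<rfloor>) \<le> Gamma (x + 1)"
proof -
  define m where "m = nat \<lfloor>x\<rfloor>"
  have m: "real m \<le> x" "m \<ge> 1" using assms unfolding m_def by linarith+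
  have "fact m = Gamma (real m + 1)" using Gamma_fact[where 'a=real, of m] by (simp add: add.commute)
  also have "\<dots> \<le> Gamma (x + 1)"
  proof (cases "real m = x")
    case False
    with m show ?thesis by (intro less_imp_le Gamma_real_strict_mono) auto
  qed simp
  finally show ?thesis unfolding m_def .
qed

(* With m = floor (k nu), Gamma (k nu + 1) \<ge> m!; the exponential series absorbs (Z W)^m / m!,
   and the remaining factor W powr (- k nu) is 2^(-k). *)
lemma power_div_Gamma_le_geometric:
  fixes nu y Z :: real
  assumes nu: "nu > 0" and Z: "Z \<ge> 1" and y: "0 \<le> y" "y \<le> Z powr nu" and k: "real k * nu \<ge> 1"
  defines "W \<equiv> 2 powr (1 / nu)"
  shows "y ^ k / Gamma (real k * nu + 1) \<le> Z * exp (Z * W) * W * (1 / 2) ^ k"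
proof -
  define m where "m = nat \<lfloor>real k * nu\<rfloor>"
  have m: "real m \<le> real k * nu" "real k * nu < real m + 1" using k unfolding m_def by linarith+
  have W: "W \<ge> 1" unfolding W_def using nu by (simp add: ge_one_powr_ge_zero)
  have "y ^ k \<le> (Z powr nu) ^ k" using y by (intro power_mono)
  also have "\<dots> = Z powr (real k * nu)" using Z by (simp add: powr_powr powr_realpow[symmetric] mult.commute)
  also have "\<dots> \<le> Z powr (real m + 1)" using Z m by (intro powr_mono) auto
  also have "\<dots> = Z * Z ^ m" using Z by (simp add: powr_add powr_realpow)
  finally have yk: "y ^ k \<le> Z * Z ^ m" .
  have "Z ^ m / fact m = ((Z * W) ^ m / fact m) * W powr (- real m)"
    using W by (simp add: power_mult_distrib powr_minus powr_realpow divide_inverse)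
  also have "\<dots> \<le> exp (Z * W) * W powr (1 - real k * nu)"
    using Z W m by (intro mult_mono power_div_fact_le_exp powr_mono) auto
  also have "W powr (1 - real k * nu) = W * (1 / 2) ^ k"
    using W nu by (simp add: W_def powr_diff powr_powr powr_realpow power_divide)
  finally have "Z ^ m / fact m \<le> exp (Z * W) * (W * (1 / 2) ^ k)" .
  moreover have "0 < Gamma (real k * nu + 1)" using nu by (intro Gamma_real_pos) (simp add: add_nonneg_pos)
  moreover have "fact m \<le> Gamma (real k * nu + 1)" unfolding m_def by (rule fact_floor_le_Gamma[OF k])
  ultimately have "y ^ k / Gamma (real k * nu + 1) \<le> Z * (Z ^ m / fact m)"
    using yk y Z by (simp add: frac_le)
  also have "\<dots> \<le> Z * (exp (Z * W) * (W * (1 / 2) ^ k))"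
    using \<open>Z ^ m / fact m \<le> _\<close> Z by (intro mult_left_mono) auto
  finally show ?thesis by (simp add: mult_ac)
qed

lemma summable_power_div_Gamma:
  fixes nu y :: real
  assumes nu: "nu > 0" and y: "y \<ge> 0"
  shows "summable (\<lambda>k. y ^ k / Gamma (real k * nu + 1))"
proof (rule summable_comparison_test'[where N = "nat \<lceil>1 / nu\<rceil>"])
  define Z where "Z = max 1 y powr (1 / nu)"
  define W where "W = (2::real) powr (1 / nu)"
  show "summable (\<lambda>k. Z * exp (Z * W) * W * (1 / 2) ^ k)"
    by (intro summable_mult complete_algebra_summable_geometric) simp
  fix k :: nat assume "nat \<lceil>1 / nu\<rceil> \<le> k"
  then have "real k * nu \<ge> 1" using nu by (simp add: field_simps)
  moreover have "Z \<ge> 1" "y \<le> Z powr nu"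
    using nu by (simp_all add: Z_def ge_one_powr_ge_zero powr_powr)
  ultimately show "norm (y ^ k / Gamma (real k * nu + 1)) \<le> Z * exp (Z * W) * W * (1 / 2) ^ k"
    using power_div_Gamma_le_geometric[OF nu _ y] nu y unfolding W_def
    by (simp add: Gamma_real_pos add_nonneg_pos)
qed

(* The Caputo derivative of any function whose derivative is D, without going through deriv. *)
definition caputo_of_deriv :: "real \<Rightarrow> (real \<Rightarrow> real) \<Rightarrow> real \<Rightarrow> real" where
  "caputo_of_deriv nu D t =
     (if nu = 1 then D t else 1 / Gamma (1 - nu) * integral {0..t} (\<lambda>s. (t - s) powr (- nu) * D s))"

lemma caputo_eq_caputo_of_deriv: "caputo nu f t = caputo_of_deriv nu (deriv f) t"
  by (simp add: caputo_def caputo_of_deriv_def)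

lemma caputo_of_deriv_diff:
  assumes "nu < 1 \<Longrightarrow> (\<lambda>s. (t - s) powr (- nu) * D1 s) integrable_on {0..t}"
    and "nu < 1 \<Longrightarrow> (\<lambda>s. (t - s) powr (- nu) * D2 s) integrable_on {0..t}"
    and "nu \<le> 1"
  shows "caputo_of_deriv nu (\<lambda>s. D1 s - D2 s) t = caputo_of_deriv nu D1 t - caputo_of_deriv nu D2 t"
  using assms by (auto simp: caputo_of_deriv_def right_diff_distrib integral_diff)

(* Integration by parts against the kernel: the boundary term at 0 and the remaining integrand
   nu (t0 - s) powr (- nu - 1) (h s - h t0) are nonpositive because h t0 is maximal. *)
lemma kernel_integral_ge_at_max:
  fixes h H :: "real \<Rightarrow> real"
  assumes nu: "0 < nu" and x: "0 < x" "x < t0"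
    and cont: "continuous_on {0..t0} h"
    and deriv: "\<And>s. s \<in> {0<..t0} \<Longrightarrow> (h has_real_derivative H s) (at s)"
    and int: "(\<lambda>s. (t0 - s) powr (- nu) * H s) integrable_on {0..t0}"
    and max: "\<And>s. s \<in> {0..t0} \<Longrightarrow> h s \<le> h t0"
  shows "integral {0..x} (\<lambda>s. (t0 - s) powr (- nu) * H s) \<ge> (t0 - x) powr (- nu) * (h x - h t0)"
proof -
  define g where "g s = (t0 - s) powr (- nu) * H s" for s
  define w where "w s = (t0 - s) powr (- nu) * (h s - h t0)" for s
  define phi where "phi s = nu * (t0 - s) powr (- nu - 1) * (h s - h t0)" for s
  have "((\<lambda>s. phi s + g s) has_integral (w x - w 0)) {0..x}"
  proof (rule fundamental_theorem_of_calculus_interior)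
    show "continuous_on {0..x} w"
      unfolding w_def using x
      by (intro continuous_intros continuous_on_subset[OF cont]) auto
    fix s assume s: "s \<in> {0<..<x}"
    then have "((\<lambda>s. (t0 - s) powr (- nu)) has_real_derivative nu * (t0 - s) powr (- nu - 1)) (at s)"
      using x by (auto intro!: derivative_eq_intros)
    from DERIV_mult[OF this DERIV_diff[OF deriv DERIV_const]]
    show "(w has_vector_derivative phi s + g s) (at s)"
      using s x unfolding w_def phi_def g_def
      by (simp add: has_real_derivative_iff_has_vector_derivative[symmetric] ac_simps)
  qed (use x in auto)
  moreover have g_int: "g integrable_on {0..x}"
    unfolding g_def by (rule integrable_subinterval_real[OF int]) (use x in auto)
  ultimately have phi_int: "phi integrable_on {0..x}"
    using integrable_diff[of "\<lambda>s. phi s + g s" "{0..x}" g] by (auto simp: has_integral_iff)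
  have "integral {0..x} phi \<le> integral {0..x} (\<lambda>s. 0)"
    using max x nu by (intro integral_le phi_int) (auto simp: phi_def mult_nonneg_nonpos)
  moreover have "integral {0..x} g = w x - w 0 - integral {0..x} phi"
    using integral_add[OF phi_int g_int] \<open>((\<lambda>s. phi s + g s) has_integral (w x - w 0)) {0..x}\<close>
    by (simp add: has_integral_iff)
  moreover have "w 0 \<le> 0" unfolding w_def using max[of 0] x by (simp add: mult_nonneg_nonpos)
  ultimately show ?thesis unfolding g_def w_def by simp
qed

lemma kernel_increment_tendsto_0:
  fixes h :: "real \<Rightarrow> real"
  assumes nu: "nu < 1" and deriv: "(h has_real_derivative H0) (at t0)"
  shows "((\<lambda>x. (t0 - x) powr (- nu) * (h x - h t0)) \<longlongrightarrow> 0) (at_left t0)"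
proof -
  have near: "\<forall>\<^sub>F x in at_left t0. x \<in> {t0 - 1<..<t0}"
    by (rule eventually_at_left_real) simp
  have quot: "((\<lambda>x. (h x - h t0) / (x - t0)) \<longlongrightarrow> H0) (at_left t0)"
    using deriv unfolding has_field_derivative_iff by (rule filterlim_mono) (simp_all add: at_le)
  have "((\<lambda>x. (t0 - x) powr (1 - nu)) \<longlongrightarrow> 0) (at_left t0)"
  proof (rule tendsto_zero_powrI)
    show "((\<lambda>x. t0 - x) \<longlongrightarrow> 0) (at_left t0)"
      using tendsto_diff[OF tendsto_const tendsto_ident_at, of t0 t0 "{..<t0}"] by simp
    show "\<forall>\<^sub>F x in at_left t0. 0 \<le> t0 - x"
      using near by (auto elim: eventually_mono)
  qed (use nu in auto)
  from tendsto_mult[OF this quot]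
  have "((\<lambda>x. - ((t0 - x) powr (1 - nu) * ((h x - h t0) / (x - t0)))) \<longlongrightarrow> 0) (at_left t0)"
    using tendsto_minus by fastforce
  moreover have "\<forall>\<^sub>F x in at_left t0.
      - ((t0 - x) powr (1 - nu) * ((h x - h t0) / (x - t0))) = (t0 - x) powr (- nu) * (h x - h t0)"
  proof (rule eventually_mono[OF near])
    fix x assume "x \<in> {t0 - 1<..<t0}"
    then have x: "x < t0" by simp
    then have e: "(t0 - x) powr (1 - nu) = (t0 - x) * (t0 - x) powr (- nu)"
      by (simp add: powr_add[symmetric] powr_mult_base)
    show "- ((t0 - x) powr (1 - nu) * ((h x - h t0) / (x - t0))) = (t0 - x) powr (- nu) * (h x - h t0)"
      unfolding e using x by (simp add: field_simps)
  qed
  ultimately show ?thesis by (rule Lim_transform_eventually)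
qed

lemma caputo_of_deriv_nonneg_at_max:
  fixes h H :: "real \<Rightarrow> real"
  assumes nu: "0 < nu" "nu \<le> 1" and t0: "t0 > 0"
    and cont: "continuous_on {0..t0} h"
    and deriv: "\<And>s. s \<in> {0<..t0} \<Longrightarrow> (h has_real_derivative H s) (at s)"
    and int: "nu < 1 \<Longrightarrow> (\<lambda>s. (t0 - s) powr (- nu) * H s) integrable_on {0..t0}"
    and max: "\<And>s. s \<in> {0..t0} \<Longrightarrow> h s \<le> h t0"
  shows "caputo_of_deriv nu H t0 \<ge> 0"
proof (cases "nu = 1")
  case True
  have "\<not> H t0 < 0"
  proof
    assume "H t0 < 0"
    from DERIV_neg_dec_left[OF deriv this] t0 obtain d where "d > 0"
      and "\<And>e. 0 < e \<Longrightarrow> e < d \<Longrightarrow> h t0 < h (t0 - e)" by auto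
    then have "h t0 < h (t0 - min d t0 / 2)" using t0 by simp
    moreover have "h (t0 - min d t0 / 2) \<le> h t0" using t0 \<open>d > 0\<close> by (intro max) auto
    ultimately show False by simp
  qed
  with True show ?thesis by (simp add: caputo_of_deriv_def)
next
  case False
  with nu have nu1: "nu < 1" by simp
  define I where "I x = integral {0..x} (\<lambda>s. (t0 - s) powr (- nu) * H s)" for x
  have "(I \<longlongrightarrow> I t0) (at_left t0)"
  proof -
    have "continuous_on {0..t0} I"
      unfolding I_def by (rule indefinite_integral_continuous_1[OF int[OF nu1]])
    then have "(I \<longlongrightarrow> I t0) (at t0 within {0..t0})"
      using t0 by (simp add: continuous_on_def)
    then show ?thesis
      using at_within_Icc_at_left[OF t0] by simp
  qed
  moreover have "\<forall>\<^sub>F x in at_left t0. (t0 - x) powr (- nu) * (h x - h t0) \<le> I x"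
    using eventually_at_left_real[OF t0] unfolding I_def
    by (rule eventually_mono) (intro kernel_integral_ge_at_max[OF nu(1) _ _ cont deriv int[OF nu1] max]; simp)
  ultimately have "0 \<le> I t0"
    using kernel_increment_tendsto_0[OF nu1 deriv] t0 by (intro tendsto_le) auto
  moreover have "Gamma (1 - nu) > 0" using nu1 by (intro Gamma_real_pos) simp
  ultimately show ?thesis using False by (simp add: caputo_of_deriv_def I_def)
qed

lemma caputo_relaxation_nonpos:
  fixes d D :: "real \<Rightarrow> real"
  assumes nu: "0 < nu" "nu \<le> 1" and c: "c > 0"
    and cont: "continuous_on {0..} d" and d0: "d 0 = 0"
    and deriv: "\<And>s. s > 0 \<Longrightarrow> (d has_real_derivative D s) (at s)"
    and int: "\<And>t. t > 0 \<Longrightarrow> nu < 1 \<Longrightarrow> (\<lambda>s. (t - s) powr (- nu) * D s) integrable_on {0..t}"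
    and eq: "\<And>t. t > 0 \<Longrightarrow> caputo_of_deriv nu D t = - c * d t"
    and t: "t \<ge> 0"
  shows "d t \<le> 0"
proof (rule ccontr)
  assume "\<not> d t \<le> 0"
  obtain t0 where t0: "t0 \<in> {0..t}" and max: "\<And>s. s \<in> {0..t} \<Longrightarrow> d s \<le> d t0"
  proof -
    have "continuous_on {0..t} d" by (rule continuous_on_subset[OF cont]) auto
    then show ?thesis
      using continuous_attains_sup[of "{0..t}" d] t that by auto
  qed
  have "d t0 > 0" using max[of t] t \<open>\<not> d t \<le> 0\<close> by auto
  with d0 t0 have "t0 > 0" by (cases "t0 = 0") auto
  have "caputo_of_deriv nu D t0 \<ge> 0"
  proof (rule caputo_of_deriv_nonneg_at_max[OF nu \<open>t0 > 0\<close>])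
    show "continuous_on {0..t0} d" by (rule continuous_on_subset[OF cont]) auto
    show "(d has_real_derivative D s) (at s)" if "s \<in> {0<..t0}" for s
      using that by (intro deriv) simp
    show "(\<lambda>s. (t0 - s) powr (- nu) * D s) integrable_on {0..t0}" if "nu < 1"
      using \<open>t0 > 0\<close> that by (rule int)
    show "d s \<le> d t0" if "s \<in> {0..t0}" for s
      using that t0 by (intro max) simp
  qed
  moreover have "caputo_of_deriv nu D t0 < 0"
    using eq[OF \<open>t0 > 0\<close>] c \<open>d t0 > 0\<close> by simp
  ultimately show False by simp
qed

lemma caputo_relaxation_eq_0:
  fixes d D :: "real \<Rightarrow> real"
  assumes nu: "0 < nu" "nu \<le> 1" and c: "c > 0"
    and cont: "continuous_on {0..} d" and d0: "d 0 = 0"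
    and deriv: "\<And>s. s > 0 \<Longrightarrow> (d has_real_derivative D s) (at s)"
    and int: "\<And>t. t > 0 \<Longrightarrow> nu < 1 \<Longrightarrow> (\<lambda>s. (t - s) powr (- nu) * D s) integrable_on {0..t}"
    and eq: "\<And>t. t > 0 \<Longrightarrow> caputo_of_deriv nu D t = - c * d t"
    and t: "t \<ge> 0"
  shows "d t = 0"
proof -
  have "- d t \<le> 0"
  proof (rule caputo_relaxation_nonpos[OF nu c _ _ _ _ _ t, where D = "\<lambda>s. - D s"])
    show "continuous_on {0..} (\<lambda>t. - d t)" using cont by (rule continuous_on_minus)
    show "((\<lambda>t. - d t) has_real_derivative - D s) (at s)" if "s > 0" for s
      using deriv[OF that] by (rule DERIV_minus)
    show "(\<lambda>s. (t - s) powr (- nu) * - D s) integrable_on {0..t}" if "t > 0" "nu < 1" for t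
      using integrable_neg[OF int[OF that]] by simp
    show "caputo_of_deriv nu (\<lambda>s. - D s) t = - c * - d t" if "t > 0" for t
      using eq[OF that] by (auto simp: caputo_of_deriv_def)
  qed (use d0 in simp)
  with caputo_relaxation_nonpos[OF assms] show ?thesis by simp
qed

definition ml_coeff :: "real \<Rightarrow> (nat \<Rightarrow> real) \<Rightarrow> nat \<Rightarrow> real" where
  "ml_coeff nu a k = a k / Gamma (real k * nu + 1)"

definition ml_series :: "real \<Rightarrow> (nat \<Rightarrow> real) \<Rightarrow> real \<Rightarrow> real" where
  "ml_series nu a t = (\<Sum>k. ml_coeff nu a k * (t powr nu) ^ k)"

definition ml_series_deriv :: "real \<Rightarrow> (nat \<Rightarrow> real) \<Rightarrow> real \<Rightarrow> real" where
  "ml_series_deriv nu a t = (\<Sum>k. diffs (ml_coeff nu a) k * (t powr nu) ^ k) * (nu * t powr (nu - 1))"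

locale ml_series_coeffs =
  fixes nu :: real and a :: "nat \<Rightarrow> real"
  assumes nu_pos: "0 < nu" and exp_bound: "\<exists>C M. \<forall>k. \<bar>a k\<bar> \<le> C * M ^ k"
begin

lemma Gamma_pos: "Gamma (real k * nu + 1) > 0"
  using nu_pos by (intro Gamma_real_pos) (simp add: add_nonneg_pos)

lemma summable_norm_ml_coeff: "summable (\<lambda>k. norm (ml_coeff nu a k * y ^ k))"
proof -
  obtain C0 M0 where CM0: "\<And>k. \<bar>a k\<bar> \<le> C0 * M0 ^ k"
    using exp_bound by blast
  define C M where "C = \<bar>C0\<bar>" and "M = \<bar>M0\<bar>"
  have CM: "\<bar>a k\<bar> \<le> C * M ^ k" for k
    using CM0[of k] abs_ge_self[of "C0 * M0 ^ k"] by (simp add: C_def M_def abs_mult power_abs)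
  have "summable (\<lambda>k. C * ((M * \<bar>y\<bar>) ^ k / Gamma (real k * nu + 1)))"
    by (intro summable_mult summable_power_div_Gamma nu_pos) (auto simp: M_def)
  then show ?thesis
  proof (rule summable_comparison_test'[where N = 0])
    fix k
    have "\<bar>a k\<bar> * \<bar>y\<bar> ^ k / Gamma (real k * nu + 1) \<le> C * M ^ k * \<bar>y\<bar> ^ k / Gamma (real k * nu + 1)"
      using CM[of k] Gamma_pos[of k] by (intro divide_right_mono mult_right_mono) auto
    then show "norm (norm (ml_coeff nu a k * y ^ k)) \<le> C * ((M * \<bar>y\<bar>) ^ k / Gamma (real k * nu + 1))"
      using Gamma_pos[of k] by (simp add: ml_coeff_def abs_mult power_abs power_mult_distrib)
  qed
qed

lemma summable_ml_coeff: "summable (\<lambda>k. ml_coeff nu a k * y ^ k)"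
  and summable_abs_ml_coeff: "summable (\<lambda>k. \<bar>ml_coeff nu a k\<bar> * y ^ k)"
  using summable_norm_ml_coeff[of y] by (auto intro: summable_norm_cancel simp: abs_mult)

lemma ml_series_has_real_derivative:
  assumes "s > 0"
  shows "(ml_series nu a has_real_derivative ml_series_deriv nu a s) (at s)"
proof -
  have "((\<lambda>y. \<Sum>k. ml_coeff nu a k * y ^ k) has_real_derivative
      (\<Sum>k. diffs (ml_coeff nu a) k * (s powr nu) ^ k)) (at (s powr nu))"
    by (rule termdiffs_strong_converges_everywhere) (rule summable_ml_coeff)
  from DERIV_chain2[OF this has_real_derivative_powr[OF assms]]
  show ?thesis unfolding ml_series_def[abs_def] ml_series_deriv_def .
qed

lemma continuous_on_ml_series: "continuous_on {0..} (ml_series nu a)"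
proof -
  have "continuous_on UNIV (\<lambda>y. \<Sum>k. ml_coeff nu a k * y ^ k)"
    by (intro continuous_at_imp_continuous_on ballI
        DERIV_isCont[OF termdiffs_strong_converges_everywhere[OF summable_ml_coeff]])
  moreover have "continuous_on {0..} (\<lambda>t::real. t powr nu)"
    using nu_pos by (intro continuous_on_powr') auto
  ultimately show ?thesis unfolding ml_series_def[abs_def]
    by (rule continuous_on_compose2) auto
qed

lemma ml_series_0: "ml_series nu a 0 = a 0"
  using nu_pos powser_zero[of "ml_coeff nu a"] by (simp add: ml_series_def ml_coeff_def)

lemma ml_series_coeffs_Suc: "ml_series_coeffs nu (\<lambda>k. a (Suc k))"
proof
  obtain C M where CM: "\<And>k. \<bar>a k\<bar> \<le> C * M ^ k" using exp_bound by blast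
  have "\<forall>k. \<bar>a (Suc k)\<bar> \<le> (C * M) * M ^ k"
    using CM by (metis mult.assoc power_Suc)
  then show "\<exists>C M. \<forall>k. \<bar>a (Suc k)\<bar> \<le> C * M ^ k" by blast
qed (rule nu_pos)

lemma diffs_ml_coeff: "nu * diffs (ml_coeff nu a) k = a (Suc k) / Gamma (real (Suc k) * nu)"
proof -
  have "real (Suc k) * nu > 0" using nu_pos by simp
  then have "Gamma (real (Suc k) * nu + 1) = real (Suc k) * nu * Gamma (real (Suc k) * nu)"
    by (intro Gamma_plus1) (auto elim!: nonpos_Ints_cases)
  then show ?thesis using nu_pos by (simp add: diffs_def ml_coeff_def)
qed

lemma ml_series_deriv_nu_1:
  "nu = 1 \<Longrightarrow> t > 0 \<Longrightarrow> ml_series_deriv nu a t = ml_series nu (\<lambda>k. a (Suc k)) t"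
  using diffs_ml_coeff by (simp add: ml_series_deriv_def ml_series_def ml_coeff_def add.commute)

lemma has_integral_kernel_diffs_term:
  assumes nu: "nu < 1" and t: "t > 0"
  shows "((\<lambda>s. (t - s) powr (- nu) * (diffs (ml_coeff nu a) k * (s powr nu) ^ k * (nu * s powr (nu - 1))))
    has_integral Gamma (1 - nu) * (ml_coeff nu (\<lambda>k. a (Suc k)) k * (t powr nu) ^ k)) {0..t}"
proof -
  define b where "b = real (Suc k) * nu"
  have "((\<lambda>s. s powr (b - 1) * (t - s) powr ((1 - nu) - 1)) has_integral t powr (b + (1 - nu) - 1) * Beta b (1 - nu)) {0..t}"
    using nu_pos nu t by (intro has_integral_Beta_scaled) (auto simp: b_def)
  note has_integral_mult_right[OF this, of "a (Suc k) / Gamma b"]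
  moreover have "a (Suc k) / Gamma b * (t powr (b + (1 - nu) - 1) * Beta b (1 - nu))
      = Gamma (1 - nu) * (ml_coeff nu (\<lambda>k. a (Suc k)) k * (t powr nu) ^ k)"
  proof -
    have E1: "b + (1 - nu) - 1 = real k * nu" and E2: "b + (1 - nu) = real k * nu + 1"
      by (simp_all add: b_def algebra_simps)
    have "Gamma b > 0" using nu_pos by (simp add: b_def Gamma_real_pos)
    then show ?thesis
      unfolding E1 E2 Beta_def ml_coeff_def using t by (simp add: powr_power mult.commute)
  qed
  ultimately have "((\<lambda>s. a (Suc k) / Gamma b * (s powr (b - 1) * (t - s) powr ((1 - nu) - 1)))
      has_integral Gamma (1 - nu) * (ml_coeff nu (\<lambda>k. a (Suc k)) k * (t powr nu) ^ k)) {0..t}"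
    by simp
  then show ?thesis
  proof (rule has_integral_eq[rotated])
    fix s assume s: "s \<in> {0..t}"
    show "a (Suc k) / Gamma b * (s powr (b - 1) * (t - s) powr ((1 - nu) - 1))
      = (t - s) powr (- nu) * (diffs (ml_coeff nu a) k * (s powr nu) ^ k * (nu * s powr (nu - 1)))"
    proof (cases "s = 0")
      case False
      then have "(s powr nu) ^ k * s powr (nu - 1) = s powr (b - 1)"
        using s by (simp add: b_def powr_power powr_add[symmetric] algebra_simps)
      moreover have "(t - s) powr (- nu) * (diffs (ml_coeff nu a) k * (s powr nu) ^ k * (nu * s powr (nu - 1)))
          = (nu * diffs (ml_coeff nu a) k) * ((s powr nu) ^ k * s powr (nu - 1)) * (t - s) powr (- nu)"
        by (simp only: mult_ac)
      ultimately show ?thesis unfolding diffs_ml_coeff b_def by simp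
    qed simp
  qed
qed

lemma summable_diffs_abs_ml_coeff: "summable (\<lambda>k. diffs (\<lambda>k. \<bar>ml_coeff nu a k\<bar>) k * y ^ k)"
  by (rule termdiff_converges_all) (rule summable_abs_ml_coeff)

lemma abs_partial_sum_diffs_ml_coeff_le:
  assumes "0 \<le> s" "s \<le> t"
  shows "\<bar>\<Sum>k<N. diffs (ml_coeff nu a) k * (s powr nu) ^ k\<bar>
    \<le> (\<Sum>k. diffs (\<lambda>k. \<bar>ml_coeff nu a k\<bar>) k * (t powr nu) ^ k)"
proof -
  have "\<bar>\<Sum>k<N. diffs (ml_coeff nu a) k * (s powr nu) ^ k\<bar>
      \<le> (\<Sum>k<N. diffs (\<lambda>k. \<bar>ml_coeff nu a k\<bar>) k * (s powr nu) ^ k)"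
    by (rule order.trans[OF sum_abs]) (simp add: abs_mult diffs_def)
  also have "\<dots> \<le> (\<Sum>k. diffs (\<lambda>k. \<bar>ml_coeff nu a k\<bar>) k * (s powr nu) ^ k)"
    by (rule sum_le_suminf[OF summable_diffs_abs_ml_coeff]) (auto simp: diffs_def)
  also have "\<dots> \<le> (\<Sum>k. diffs (\<lambda>k. \<bar>ml_coeff nu a k\<bar>) k * (t powr nu) ^ k)"
    using assms nu_pos by (intro suminf_le summable_diffs_abs_ml_coeff mult_left_mono power_mono powr_mono2)
      (auto simp: diffs_def)
  finally show ?thesis .
qed

lemma has_integral_kernel_ml_series_deriv:
  assumes nu: "nu < 1" and t: "t > 0"
  shows "((\<lambda>s. (t - s) powr (- nu) * ml_series_deriv nu a s)
    has_integral Gamma (1 - nu) * ml_series nu (\<lambda>k. a (Suc k)) t) {0..t}"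
proof -
  interpret shifted: ml_series_coeffs nu "\<lambda>k. a (Suc k)" by (rule ml_series_coeffs_Suc)
  let ?d = "diffs (ml_coeff nu a)"
  define f where "f N s = (\<Sum>k<N. (t - s) powr (- nu) * (?d k * (s powr nu) ^ k * (nu * s powr (nu - 1))))"
    for N s
  define K where "K = nu * (\<Sum>k. diffs (\<lambda>k. \<bar>ml_coeff nu a k\<bar>) k * (t powr nu) ^ k)"
  have f_eq: "f N s = (t - s) powr (- nu) * (nu * s powr (nu - 1)) * (\<Sum>k<N. ?d k * (s powr nu) ^ k)"
    for N s unfolding f_def sum_distrib_left by (simp add: mult_ac)
  show ?thesis
  proof (rule has_integral_dominated_convergence)
    show "(f N has_integral (\<Sum>k<N. Gamma (1 - nu) * (ml_coeff nu (\<lambda>k. a (Suc k)) k * (t powr nu) ^ k)))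
      {0..t}" for N
      unfolding f_def by (intro has_integral_sum has_integral_kernel_diffs_term nu t) auto
    have "((\<lambda>s. s powr (nu - 1) * (t - s) powr ((1 - nu) - 1))
        has_integral t powr (nu + (1 - nu) - 1) * Beta nu (1 - nu)) {0..t}"
      using nu_pos nu t by (intro has_integral_Beta_scaled) auto
    then show "(\<lambda>s. K * (s powr (nu - 1) * (t - s) powr ((1 - nu) - 1))) integrable_on {0..t}"
      by (intro integrable_on_mult_right has_integral_integrable)
    show "\<forall>s\<in>{0..t}. norm (f N s) \<le> K * (s powr (nu - 1) * (t - s) powr ((1 - nu) - 1))" for N
    proof
      fix s assume "s \<in> {0..t}"
      then have "norm (f N s) \<le> (t - s) powr (- nu) * (nu * s powr (nu - 1)) * (K / nu)"
        using abs_partial_sum_diffs_ml_coeff_le[of s t N] nu_pos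
        unfolding f_eq K_def by (simp add: abs_mult mult_left_mono)
      then show "norm (f N s) \<le> K * (s powr (nu - 1) * (t - s) powr ((1 - nu) - 1))"
        using nu_pos by (simp add: mult_ac)
    qed
    show "\<forall>s\<in>{0..t}. (\<lambda>N. f N s) \<longlonglongrightarrow> (t - s) powr (- nu) * ml_series_deriv nu a s"
    proof
      fix s
      have "(\<lambda>N. \<Sum>k<N. ?d k * (s powr nu) ^ k) \<longlonglongrightarrow> (\<Sum>k. ?d k * (s powr nu) ^ k)"
        by (intro summable_LIMSEQ termdiff_converges_all summable_ml_coeff)
      then show "(\<lambda>N. f N s) \<longlonglongrightarrow> (t - s) powr (- nu) * ml_series_deriv nu a s"
        unfolding f_eq ml_series_deriv_def by (auto intro!: tendsto_intros simp: mult_ac)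
    qed
    have "(\<lambda>N. \<Sum>k<N. ml_coeff nu (\<lambda>k. a (Suc k)) k * (t powr nu) ^ k) \<longlonglongrightarrow> ml_series nu (\<lambda>k. a (Suc k)) t"
      unfolding ml_series_def by (intro summable_LIMSEQ shifted.summable_ml_coeff)
    then show "(\<lambda>N. \<Sum>k<N. Gamma (1 - nu) * (ml_coeff nu (\<lambda>k. a (Suc k)) k * (t powr nu) ^ k))
        \<longlonglongrightarrow> Gamma (1 - nu) * ml_series nu (\<lambda>k. a (Suc k)) t"
      unfolding sum_distrib_left[symmetric] by (intro tendsto_intros)
  qed
qed

lemma caputo_of_deriv_ml_series:
  assumes "nu \<le> 1" and t: "t > 0"
  shows "caputo_of_deriv nu (ml_series_deriv nu a) t = ml_series nu (\<lambda>k. a (Suc k)) t"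
proof (cases "nu = 1")
  case True
  then show ?thesis using ml_series_deriv_nu_1[OF True t] by (simp add: caputo_of_deriv_def)
next
  case False
  with assms have "nu < 1" by simp
  then have "Gamma (1 - nu) > 0" by (intro Gamma_real_pos) simp
  with False show ?thesis
    using integral_unique[OF has_integral_kernel_ml_series_deriv[OF \<open>nu < 1\<close> t]]
    by (simp add: caputo_of_deriv_def)
qed

lemma eq_ml_series_if_caputo_relaxation:
  fixes f :: "real \<Rightarrow> real"
  assumes nu: "nu \<le> 1" and c: "c > 0"
    and cont: "continuous_on {0..} f"
    and diff: "\<And>t. t > 0 \<Longrightarrow> f differentiable (at t)"
    and int: "\<And>t. t > 0 \<Longrightarrow> nu < 1 \<Longrightarrow> (\<lambda>s. (t - s) powr (- nu) * deriv f s) integrable_on {0..t}"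
    and eq: "\<And>t. t > 0 \<Longrightarrow>
      caputo nu f t + c * f t = ml_series nu (\<lambda>k. a (Suc k)) t + c * ml_series nu a t"
    and init: "f 0 = a 0"
    and t: "t \<ge> 0"
  shows "f t = ml_series nu a t"
proof -
  have kernel_int: "(\<lambda>s. (t - s) powr (- nu) * ml_series_deriv nu a s) integrable_on {0..t}"
    if "t > 0" "nu < 1" for t
    using has_integral_kernel_ml_series_deriv[OF that(2,1)] by (rule has_integral_integrable)
  have "(\<lambda>t. f t - ml_series nu a t) t = 0"
  proof (rule caputo_relaxation_eq_0[OF nu_pos nu c _ _ _ _ _ t,
        where D = "\<lambda>s. deriv f s - ml_series_deriv nu a s"])
    show "continuous_on {0..} (\<lambda>t. f t - ml_series nu a t)"
      using cont continuous_on_ml_series by (rule continuous_on_diff)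
    show "f 0 - ml_series nu a 0 = 0" by (simp add: init ml_series_0)
    show "((\<lambda>t. f t - ml_series nu a t) has_real_derivative deriv f s - ml_series_deriv nu a s) (at s)"
      if "s > 0" for s
      using diff[OF that] ml_series_has_real_derivative[OF that]
      by (intro DERIV_diff) (simp_all add: DERIV_deriv_iff_real_differentiable)
    show "(\<lambda>s. (t - s) powr (- nu) * (deriv f s - ml_series_deriv nu a s)) integrable_on {0..t}"
      if "t > 0" "nu < 1" for t
      using integrable_diff[OF int[OF that] kernel_int[OF that]] by (simp add: right_diff_distrib)
    show "caputo_of_deriv nu (\<lambda>s. deriv f s - ml_series_deriv nu a s) t = - c * (f t - ml_series nu a t)"
      if "t > 0" for t
      using eq[OF that] caputo_of_deriv_ml_series[OF nu that]
        caputo_of_deriv_diff[OF int[OF that] kernel_int[OF that] nu]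
      by (simp add: caputo_eq_caputo_of_deriv algebra_simps)
  qed
  then show ?thesis by simp
qed

end

lemma ml_series_Suc_eq:
  assumes a: "ml_series_coeffs nu a" and b: "ml_series_coeffs nu b"
    and rec: "\<And>k. a (Suc k) = x * a k + y * b k"
  shows "ml_series nu (\<lambda>k. a (Suc k)) t = x * ml_series nu a t + y * ml_series nu b t"
proof -
  have "(\<lambda>k. x * (ml_coeff nu a k * (t powr nu) ^ k) + y * (ml_coeff nu b k * (t powr nu) ^ k))
      sums (x * ml_series nu a t + y * ml_series nu b t)"
    unfolding ml_series_def
    by (intro sums_add sums_mult summable_sums ml_series_coeffs.summable_ml_coeff a b)
  then show ?thesis
    unfolding ml_series_def ml_coeff_def rec by (simp add: sums_iff add_divide_distrib algebra_simps)
qed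

definition Lambda_sum :: "(nat \<Rightarrow> real) \<Rightarrow> nat \<Rightarrow> nat \<Rightarrow> real" where
  "Lambda_sum lam k n = (\<Sum>kk\<in>Lambda_set k n. \<Prod>j=1..n. lam j ^ kk j)"

lemma finite_Lambda_set: "finite (Lambda_set k n)"
proof (rule finite_subset)
  show "Lambda_set k n \<subseteq> {f. \<forall>x. (x \<in> {1..n} \<longrightarrow> f x \<in> {0..k}) \<and> (x \<notin> {1..n} \<longrightarrow> f x = 0)}"
  proof safe
    fix f x assume f: "f \<in> Lambda_set k n" and x: "x \<in> {1..n}"
    have "f x \<le> (\<Sum>j=1..n. f j)" using x by (intro member_le_sum) auto
    then show "f x \<in> {0..k}" using f by (auto simp: Lambda_set_def)
  qed (auto simp: Lambda_set_def)
qed (rule finite_set_of_finite_funs; simp)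

lemma Lambda_set_empty:
  assumes "k < n - 1"
  shows "Lambda_set k n = {}"
proof (rule ccontr)
  assume "Lambda_set k n \<noteq> {}"
  then obtain f where f: "f \<in> Lambda_set k n" by blast
  have "n - 1 = (\<Sum>j=2..n. (1::nat))" by simp
  also have "\<dots> \<le> (\<Sum>j=2..n. f j)"
    using f by (intro sum_mono) (auto simp: Lambda_set_def)
  also have "\<dots> \<le> (\<Sum>j=1..n. f j)" by (intro sum_mono2) auto
  also have "\<dots> = k" using f by (simp add: Lambda_set_def)
  finally show False using assms by simp
qed

lemma Lambda_sum_eq_0: "k < n - 1 \<Longrightarrow> Lambda_sum lam k n = 0"
  by (simp add: Lambda_sum_def Lambda_set_empty)

lemma Lambda_sum_1: "Lambda_sum lam k 1 = lam 1 ^ k"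
proof -
  have "Lambda_set k 1 = {\<lambda>j. if j = 1 then k else 0}"
    by (auto simp: Lambda_set_def)
  then show ?thesis by (simp add: Lambda_sum_def)
qed

lemma Lambda_set_Suc_iff:
  assumes "n \<ge> 1"
  shows "f \<in> Lambda_set k (Suc n) \<longleftrightarrow>
    1 \<le> f (Suc n) \<and> f (Suc n) \<le> k \<and> f(Suc n := 0) \<in> Lambda_set (k - f (Suc n)) n"
proof -
  have "(\<Sum>j=1..n. (f(Suc n := 0)) j) = (\<Sum>j=1..n. f j)"
    by (intro sum.cong) auto
  moreover have "(\<Sum>j=1..Suc n. f j) = (\<Sum>j=1..n. f j) + f (Suc n)"
    by simp
  ultimately show ?thesis
    using assms unfolding Lambda_set_def
    by (auto simp: le_Suc_eq)
qed

lemma Lambda_set_Suc: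
  assumes n: "n \<ge> 1"
  shows "Lambda_set (Suc k) (Suc n) =
     (\<lambda>kk. kk(Suc n := kk (Suc n) + 1)) ` Lambda_set k (Suc n) \<union>
     (\<lambda>kk. kk(Suc n := 1)) ` Lambda_set k n"
proof (intro equalityI subsetI)
  fix f assume "f \<in> Lambda_set (Suc k) (Suc n)"
  then have f: "1 \<le> f (Suc n)" "f (Suc n) \<le> Suc k" "f(Suc n := 0) \<in> Lambda_set (Suc k - f (Suc n)) n"
    by (simp_all add: Lambda_set_Suc_iff[OF n])
  show "f \<in> (\<lambda>kk. kk(Suc n := kk (Suc n) + 1)) ` Lambda_set k (Suc n) \<union>
     (\<lambda>kk. kk(Suc n := 1)) ` Lambda_set k n"
  proof (cases "f (Suc n) = 1")
    case True
    then have "f = (f(Suc n := 0))(Suc n := 1)" by auto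
    moreover have "f(Suc n := 0) \<in> Lambda_set k n" using f True by simp
    ultimately show ?thesis by blast
  next
    case False
    define g where "g = f(Suc n := f (Suc n) - 1)"
    have "g \<in> Lambda_set k (Suc n)"
      using f False by (simp add: Lambda_set_Suc_iff[OF n] g_def, linarith)
    moreover have "f = g(Suc n := g (Suc n) + 1)" using f by (auto simp: g_def)
    ultimately show ?thesis by blast
  qed
next
  fix f assume "f \<in> (\<lambda>kk. kk(Suc n := kk (Suc n) + 1)) ` Lambda_set k (Suc n) \<union>
     (\<lambda>kk. kk(Suc n := 1)) ` Lambda_set k n"
  then consider g where "g \<in> Lambda_set k (Suc n)" "f = g(Suc n := g (Suc n) + 1)"
    | g where "g \<in> Lambda_set k n" "f = g(Suc n := 1)" by blast
  then show "f \<in> Lambda_set (Suc k) (Suc n)"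
  proof cases
    case 1
    then show ?thesis by (auto simp: Lambda_set_Suc_iff[OF n] Suc_diff_le)
  next
    case 2
    moreover have "g(Suc n := 0) = g" using 2 by (auto simp: Lambda_set_def)
    ultimately show ?thesis by (simp add: Lambda_set_Suc_iff[OF n])
  qed
qed

lemma Lambda_sum_Suc:
  assumes n: "n \<ge> 1"
  shows "Lambda_sum lam (Suc k) (Suc n) = lam (Suc n) * (Lambda_sum lam k (Suc n) + Lambda_sum lam k n)"
proof -
  let ?inc = "\<lambda>kk::nat \<Rightarrow> nat. kk(Suc n := kk (Suc n) + 1)"
  let ?new = "\<lambda>kk::nat \<Rightarrow> nat. kk(Suc n := 1)"
  let ?P = "\<lambda>kk. \<Prod>j=1..Suc n. lam j ^ kk j"
  have prod_upd: "?P (g(Suc n := c)) = (\<Prod>j=1..n. lam j ^ g j) * lam (Suc n) ^ c" for g c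
  proof -
    have "(\<Prod>j=1..n. lam j ^ (g(Suc n := c)) j) = (\<Prod>j=1..n. lam j ^ g j)"
      by (intro prod.cong) auto
    then show ?thesis by (subst prod.cl_ivl_Suc) simp
  qed
  have upd_cancel: "g = h" if "g(Suc n := c) = h(Suc n := d)" "g (Suc n) = h (Suc n)"
    for g h :: "nat \<Rightarrow> nat" and c d
  proof -
    have "g = (g(Suc n := c))(Suc n := g (Suc n))" by simp
    also have "\<dots> = (h(Suc n := d))(Suc n := h (Suc n))" by (simp only: that)
    also have "\<dots> = h" by simp
    finally show ?thesis .
  qed
  have inj_inc: "inj_on ?inc (Lambda_set k (Suc n))"
  proof (rule inj_onI)
    fix g h :: "nat \<Rightarrow> nat" assume e: "?inc g = ?inc h"
    show "g = h" by (rule upd_cancel[OF e]) (use fun_cong[OF e, of "Suc n"] in simp)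
  qed
  have inj_new: "inj_on ?new (Lambda_set k n)"
  proof (rule inj_onI)
    fix g h assume "g \<in> Lambda_set k n" "h \<in> Lambda_set k n" "?new g = ?new h"
    moreover from this have "g (Suc n) = 0" "h (Suc n) = 0" by (simp_all add: Lambda_set_def)
    ultimately show "g = h" by (intro upd_cancel[of g 1 h 1]) auto
  qed
  have "?inc ` Lambda_set k (Suc n) \<inter> ?new ` Lambda_set k n = {}"
    by (auto simp: Lambda_set_Suc_iff[OF n] dest!: fun_cong[of _ _ "Suc n"])
  then have "Lambda_sum lam (Suc k) (Suc n)
      = sum ?P (?inc ` Lambda_set k (Suc n)) + sum ?P (?new ` Lambda_set k n)"
    unfolding Lambda_sum_def Lambda_set_Suc[OF n]
    by (intro sum.union_disjoint) (simp_all add: finite_Lambda_set)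
  also have "sum ?P (?inc ` Lambda_set k (Suc n)) = lam (Suc n) * Lambda_sum lam k (Suc n)"
    unfolding sum.reindex[OF inj_inc] o_def prod_upd
    by (simp add: Lambda_sum_def sum_distrib_left mult_ac)
  also have "sum ?P (?new ` Lambda_set k n) = lam (Suc n) * Lambda_sum lam k n"
    unfolding sum.reindex[OF inj_new] o_def prod_upd
    by (simp add: Lambda_sum_def sum_distrib_left mult_ac)
  finally show ?thesis by (simp add: algebra_simps)
qed

lemma Lambda_sum_nonneg: "(\<And>j. j \<ge> 1 \<Longrightarrow> lam j \<ge> 0) \<Longrightarrow> Lambda_sum lam k n \<ge> 0"
  unfolding Lambda_sum_def by (intro sum_nonneg prod_nonneg zero_le_power) auto

lemma Lambda_sum_le:
  assumes nonneg: "\<And>j. j \<ge> 1 \<Longrightarrow> lam j \<ge> 0" and le: "\<And>j. j \<in> {1..N} \<Longrightarrow> lam j \<le> L"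
    and n: "1 \<le> n" "n \<le> N"
  shows "Lambda_sum lam k n \<le> (2 * L) ^ k"
  using n
proof (induction n arbitrary: k rule: nat_induct_at_least)
  case base
  have "lam 1 ^ k \<le> (2 * L) ^ k" using nonneg[of 1] le[of 1] base by (intro power_mono) auto
  then show ?case by (simp only: Lambda_sum_1)
next
  case (Suc n)
  have IH_n: "Lambda_sum lam k n \<le> (2 * L) ^ k" for k
    using Suc by simp
  have L: "L \<ge> 0" "lam (Suc n) \<le> L" "lam (Suc n) \<ge> 0"
    using nonneg[of 1] le[of 1] le[of "Suc n"] nonneg[of "Suc n"] Suc by auto
  show ?case
  proof (induction k)
    case 0
    then show ?case using Suc by (simp add: Lambda_sum_eq_0)
  next
    case (Suc k)
    have "Lambda_sum lam (Suc k) (Suc n) = lam (Suc n) * (Lambda_sum lam k (Suc n) + Lambda_sum lam k n)"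
      using \<open>n \<ge> 1\<close> by (rule Lambda_sum_Suc)
    also have "\<dots> \<le> L * ((2 * L) ^ k + (2 * L) ^ k)"
      using Suc.IH IH_n[of k] L Lambda_sum_nonneg[of lam, OF nonneg]
      by (intro mult_mono add_mono) auto
    finally show ?case by (simp add: algebra_simps)
  qed
qed

(* The guard makes the coefficients vanish for n = 0, matching p 0 = 0 (Lambda_set 0 0 is not empty). *)
definition birth_coeff :: "(nat \<Rightarrow> real) \<Rightarrow> nat \<Rightarrow> nat \<Rightarrow> real" where
  "birth_coeff lam n k =
    (if n = 0 then 0 else (-1) ^ (n - 1) * (lam 1 / lam n) * (-1) ^ k * Lambda_sum lam k n)"

lemma birth_coeff_0:
  "n \<ge> 1 \<Longrightarrow> lam 1 \<noteq> 0 \<Longrightarrow> birth_coeff lam n 0 = (if n = 1 then 1 else 0)"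
  by (simp add: birth_coeff_def Lambda_sum_1[unfolded One_nat_def] Lambda_sum_eq_0)

lemma birth_coeff_Suc:
  assumes lam: "\<And>j. j \<ge> 1 \<Longrightarrow> lam j > 0" and n: "n \<ge> 1"
  shows "birth_coeff lam n (Suc k) = - lam n * birth_coeff lam n k + lam (n - 1) * birth_coeff lam (n - 1) k"
proof (cases "n = 1")
  case True
  then show ?thesis by (simp add: birth_coeff_def Lambda_sum_1[unfolded One_nat_def])
next
  case False
  then obtain m where m: "n = Suc m" "m \<ge> 1" using n by (cases n) auto
  then have "(-1::real) ^ m = - ((-1) ^ (m - 1))" by (cases m) auto
  with m lam[of m] lam[of n] show ?thesis
    by (simp add: birth_coeff_def Lambda_sum_Suc field_simps)
qed

lemma birth_coeff_exp_bound:
  assumes lam: "\<And>j. j \<ge> 1 \<Longrightarrow> lam j \<ge> 0"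
  shows "\<exists>C M. \<forall>k. \<bar>birth_coeff lam n k\<bar> \<le> C * M ^ k"
proof (cases "n = 0")
  case False
  define L where "L = (\<Sum>j=1..n. lam j)"
  have "lam j \<le> L" if "j \<in> {1..n}" for j
    unfolding L_def using that lam by (intro member_le_sum) auto
  then have "\<bar>birth_coeff lam n k\<bar> \<le> \<bar>lam 1 / lam n\<bar> * (2 * L) ^ k" for k
    using False Lambda_sum_nonneg[of lam k n, OF lam]
      Lambda_sum_le[of lam n L n k, OF lam \<open>\<And>j. j \<in> {1..n} \<Longrightarrow> lam j \<le> L\<close>]
    by (simp add: birth_coeff_def abs_mult power_abs divide_right_mono mult_left_mono)
  then show ?thesis by blast
qed (auto simp: birth_coeff_def intro!: exI[of _ 0])

lemma ml_series_birth_coeff_eq: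
  assumes lam: "\<And>j. j \<ge> 1 \<Longrightarrow> lam j > 0" and nu: "0 < nu" and n: "n \<ge> 1"
  shows "summable (\<lambda>i. let k = i + (n - 1) in
      (-1) ^ k * (t powr nu) ^ k / Gamma (real k * nu + 1) * Lambda_sum lam k n) \<and>
    ml_series nu (birth_coeff lam n) t = (-1) ^ (n - 1) * (lam 1 / lam n) *
      (\<Sum>i. let k = i + (n - 1) in (-1) ^ k * (t powr nu) ^ k / Gamma (real k * nu + 1) * Lambda_sum lam k n)"
proof -
  define C where "C = (-1) ^ (n - 1) * (lam 1 / lam n)"
  define S where "S k = (-1) ^ k * (t powr nu) ^ k / Gamma (real k * nu + 1) * Lambda_sum lam k n" for k
  interpret ml_series_coeffs nu "birth_coeff lam n"
    using nu birth_coeff_exp_bound[of lam n] lam by unfold_locales (auto simp: less_imp_le)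
  have "C \<noteq> 0" using lam[of 1] lam[OF n] by (simp add: C_def)
  have "ml_coeff nu (birth_coeff lam n) k * (t powr nu) ^ k = C * S k" for k
    using n by (simp add: ml_coeff_def birth_coeff_def C_def S_def)
  then have "S sums (ml_series nu (birth_coeff lam n) t / C)"
    using summable_ml_coeff[of "t powr nu"] \<open>C \<noteq> 0\<close> unfolding ml_series_def
    by (simp add: suminf_mult summable_sums)
  moreover have "S i = 0" if "i < n - 1" for i
    using that by (simp add: S_def Lambda_sum_eq_0)
  ultimately have "(\<lambda>i. S (i + (n - 1))) sums (ml_series nu (birth_coeff lam n) t / C)"
    by (simp add: sums_zero_iff_shift)
  with \<open>C \<noteq> 0\<close> show ?thesis
    unfolding S_def[symmetric] Let_def C_def[symmetric] by (simp add: sums_iff)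
qed

locale fractional_pure_birth =
  fixes lam :: "nat \<Rightarrow> real" and nu :: real and p :: "nat \<Rightarrow> real \<Rightarrow> real"
  assumes lam_pos: "\<And>n. n \<ge> 1 \<Longrightarrow> lam n > 0"
    and nu_pos: "0 < nu" and nu_le_1: "nu \<le> 1"
    and cont: "\<And>n. n \<ge> 1 \<Longrightarrow> continuous_on {0..} (p n)"
    and diff: "\<And>n t. n \<ge> 1 \<Longrightarrow> t > 0 \<Longrightarrow> p n differentiable (at t)"
    and kernel_int: "\<And>n t. n \<ge> 1 \<Longrightarrow> t > 0 \<Longrightarrow> nu < 1 \<Longrightarrow>
          (\<lambda>s. (t - s) powr (- nu) * deriv (p n) s) integrable_on {0..t}"
    and eq: "\<And>n t. n \<ge> 1 \<Longrightarrow> t > 0 \<Longrightarrow>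
          caputo nu (p n) t = - lam n * p n t + lam (n - 1) * p (n - 1) t"
    and p0: "\<And>t. t \<ge> 0 \<Longrightarrow> p 0 t = 0"
    and init1: "p 1 0 = 1"
    and init: "\<And>n. n \<ge> 2 \<Longrightarrow> p n 0 = 0"
begin

lemma ml_series_coeffs_birth_coeff: "ml_series_coeffs nu (birth_coeff lam n)"
  using nu_pos birth_coeff_exp_bound[of lam n] lam_pos by unfold_locales (auto simp: less_imp_le)

lemma ml_series_birth_coeff_Suc:
  "ml_series nu (\<lambda>k. birth_coeff lam (Suc n) (Suc k)) t
    = - lam (Suc n) * ml_series nu (birth_coeff lam (Suc n)) t + lam n * ml_series nu (birth_coeff lam n) t"
  using birth_coeff_Suc[of lam "Suc n", OF lam_pos]
  by (intro ml_series_Suc_eq ml_series_coeffs_birth_coeff) simp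

lemma eq_ml_series_birth_coeff: "t \<ge> 0 \<Longrightarrow> p n t = ml_series nu (birth_coeff lam n) t"
proof (induction n arbitrary: t)
  case 0
  then show ?case by (simp add: p0 ml_series_def ml_coeff_def birth_coeff_def)
next
  case (Suc n)
  show ?case
  proof (rule ml_series_coeffs.eq_ml_series_if_caputo_relaxation
      [OF ml_series_coeffs_birth_coeff nu_le_1 lam_pos cont diff kernel_int])
    show "caputo nu (p (Suc n)) t + lam (Suc n) * p (Suc n) t
      = ml_series nu (\<lambda>k. birth_coeff lam (Suc n) (Suc k)) t
        + lam (Suc n) * ml_series nu (birth_coeff lam (Suc n)) t" if "t > 0" for t
      using eq[of "Suc n" t] Suc.IH[of t] that by (simp add: ml_series_birth_coeff_Suc)
    show "p (Suc n) 0 = birth_coeff lam (Suc n) 0"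
      using init1 init[of "Suc n"] lam_pos[of 1] by (simp add: birth_coeff_0)
  qed (use Suc.prems in auto)
qed

end

theorem corollary5p5:
  fixes lam :: "nat \<Rightarrow> real" and nu :: real and p :: "nat \<Rightarrow> real \<Rightarrow> real"
  assumes lam_pos: "\<And>n. n \<ge> 1 \<Longrightarrow> lam n > 0"
    and nu: "0 < nu" "nu \<le> 1"
    and cont: "\<And>n. n \<ge> 1 \<Longrightarrow> continuous_on {0..} (p n)"
    and diff: "\<And>n t. n \<ge> 1 \<Longrightarrow> t > 0 \<Longrightarrow> p n differentiable (at t)"
    and deriv_int: "\<And>n T. n \<ge> 1 \<Longrightarrow> T > 0 \<Longrightarrow> deriv (p n) absolutely_integrable_on {0..T}"
    and kernel_int: "\<And>n t. n \<ge> 1 \<Longrightarrow> t > 0 \<Longrightarrow> nu < 1 \<Longrightarrow>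
          (\<lambda>s. (t - s) powr (- nu) * deriv (p n) s) absolutely_integrable_on {0..t}"
    and eq: "\<And>n t. n \<ge> 1 \<Longrightarrow> t > 0 \<Longrightarrow>
          caputo nu (p n) t = - lam n * p n t + lam (n - 1) * p (n - 1) t"
    and p0: "\<And>t. t \<ge> 0 \<Longrightarrow> p 0 t = 0"
    and init1: "p 1 0 = 1"
    and init: "\<And>n. n \<ge> 2 \<Longrightarrow> p n 0 = 0"
  shows "\<forall>n\<ge>1. \<forall>t\<ge>0.
    summable (\<lambda>i. let k = i + (n - 1) in
        (-1) ^ k * (t powr nu) ^ k / Gamma (real k * nu + 1)
          * (\<Sum>kk\<in>Lambda_set k n. \<Prod>j=1..n. lam j ^ kk j)) \<and>
    p n t = (-1) ^ (n - 1) * (lam 1 / lam n) *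
      (\<Sum>i. let k = i + (n - 1) in
        (-1) ^ k * (t powr nu) ^ k / Gamma (real k * nu + 1)
          * (\<Sum>kk\<in>Lambda_set k n. \<Prod>j=1..n. lam j ^ kk j))"
proof -
  interpret fractional_pure_birth lam nu p
  proof
    show "(\<lambda>s. (t - s) powr (- nu) * deriv (p n) s) integrable_on {0..t}"
      if "n \<ge> 1" "t > 0" "nu < 1" for n t
      using kernel_int[OF that] by (simp add: absolutely_integrable_on_def)
  qed (fact assms)+
  show ?thesis
    using ml_series_birth_coeff_eq[OF lam_pos nu(1)] eq_ml_series_birth_coeff
    by (simp add: Lambda_sum_def)
qed

end
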